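(* Let $\mathbf y_h^k\in\mathbb A_h$ be fixed. There exists $\beta'>0$ such that, with $\beta_h':=\beta' h_{\min}$, \[\inf_{\mu_h\in\operatorname{Ker}(L_2)\setminus\{0\}}\ \sup_{\mathbf w_h\in\operatorname{Ker}(L_1)\setminus\{0\}}\frac{(\mu_h,\nabla_h\mathbf w_h)}{\|\mu_h\|_{L^2(\Omega)}\|\mathbf w_h\|_{H^2_h(\Omega)}}\ge\beta_h'.\]
   Context: $\Omega\subset\mathbb R^2$ bounded polygonal with Lipschitz boundary, $\Gamma^D\subset\partial\Omega$ relatively open, $\mathbf n$ outward normal. $\mathcal T_h$ quasi-uniform shape-regular triangulation with cell diameters $h_T\le h$, barycenters $\mathbf x_T$, $h_{\min}=\min_Th_T$. $V_h=\mathbb P^2(\mathcal T_h)^3$, $M_h=\mathbb P^0(\mathcal T_h)^{3\times2}$, $\Upsilon_h$ = piecewise constant symmetric $2\times2$ matrix fields (all discontinuous); $\nabla_h,\nabla_h^2$ broken gradient/Hessian; $(\cdot,\cdot)$ the $L^2(\Omega)$ inner product. Skeleton $\Gamma_h$: interior edges and boundary edges in $\Gamma^D$. Jumps: on interior edges with fixed unit normal $\mathbf n_e$, $[\mathbf w]=\mathbf w^--\mathbf w^+$, $[\nabla_h\mathbf w]=(\nabla_h\mathbf w^--\nabla_h\mathbf w^+)\mathbf n_e$; on boundary edges, $[\mathbf w]=\mathbf w$, $[\nabla_h\mathbf w]=(\nabla_h\mathbf w)\mathbf n$. $\|\mathbf w_h\|_{H^2_h(\Omega)}^2=\|\nabla_h^2\mathbf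 w_h\|_{L^2(\Omega)}^2+\|h^{-1/2}[\nabla_h\mathbf w_h]\|_{L^2(\Gamma_h)}^2+\|h^{-3/2}[\mathbf w_h]\|_{L^2(\Gamma_h)}^2$. $St(3,2)=\{U:U^\top U=I_2\}$, $\mathbb A_h=\{\mathbf w_h\in V_h:\nabla_h\mathbf w_h(\mathbf x_T)\in St(3,2)\ \forall T\}$. $l_h(\nabla_h\mathbf y;\mu,\gamma)=\sum_T\int_T\gamma:(\nabla_h\mathbf y^\top\mu+\mu^\top\nabla_h\mathbf y)(\mathbf x_T)\,dx$. $L_1:V_h\to\Upsilon_h$ and $L_2:M_h\to\Upsilon_h$ are defined by $(L_1\mathbf w_h,\gamma_h)=l_h(\nabla_h\mathbf y_h^k;\nabla_h\mathbf w_h,\gamma_h)$ for all $\gamma_h\in\Upsilon_h$ and $(L_2\mu_h,\zeta_h)=l_h(\nabla_h\mathbf y_h^k;\mu_h,\zeta_h)$ for all $\zeta_h\in\Upsilon_h$. *)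

theory Defs
  imports "HOL-Analysis.Analysis"
begin

type_synonym pt = "real^2"
type_synonym cell = "pt set"       (* a cell is given by its set of 3 vertices; the closed triangle is convex hull *)
type_synonym mat32 = "real^2^3"    (* 3x2 matrices: rows indexed by 3, columns by 2 *)
type_synonym sym2 = "real^2^2"

definition lipschitz_boundary :: "pt set \<Rightarrow> bool" where
  "lipschitz_boundary \<Omega> \<longleftrightarrow>
     (\<forall>x\<in>frontier \<Omega>. \<exists>r>0. \<exists>R::real^2^2. orthogonal_matrix R \<and>
        (\<exists>(g::real \<Rightarrow> real) L. (\<forall>s t. \<bar>g s - g t\<bar> \<le> L * \<bar>s - t\<bar>) \<and>
           \<Omega> \<inter> ball x r = {p \<in> ball x r. (R *v p) $ 2 > g ((R *v p) $ 1)}))"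

definition is_triangle :: "cell \<Rightarrow> bool" where
  "is_triangle V \<longleftrightarrow> card V = 3 \<and> \<not> affine_dependent V"

text \<open>Conforming triangulation of the closure of Omega: two distinct cells meet in the
  convex hull of their common vertices (empty, a common vertex, or a common edge).\<close>
definition triangulation :: "pt set \<Rightarrow> cell set \<Rightarrow> bool" where
  "triangulation \<Omega> Th \<longleftrightarrow> finite Th \<and> Th \<noteq> {} \<and> (\<forall>V\<in>Th. is_triangle V) \<and>
     (\<Union>V\<in>Th. convex hull V) = closure \<Omega> \<and>
     (\<forall>V1\<in>Th. \<forall>V2\<in>Th. V1 \<noteq> V2 \<longrightarrow> convex hull V1 \<inter> convex hull V2 = convex hull (V1 \<inter> V2))"

definition cdiam :: "cell \<Rightarrow> real" where
  "cdiam V = diameter (convex hull V)"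

definition hmax :: "cell set \<Rightarrow> real" where
  "hmax Th = Max (cdiam ` Th)"

definition hmin :: "cell set \<Rightarrow> real" where
  "hmin Th = Min (cdiam ` Th)"

definition inradius :: "cell \<Rightarrow> real" where
  "inradius V = Sup {r. \<exists>x. cball x r \<subseteq> convex hull V}"

definition shape_regular :: "real \<Rightarrow> cell set \<Rightarrow> bool" where
  "shape_regular \<sigma> Th \<longleftrightarrow> (\<forall>V\<in>Th. cdiam V \<le> \<sigma> * inradius V)"

definition quasi_uniform :: "real \<Rightarrow> cell set \<Rightarrow> bool" where
  "quasi_uniform \<kappa> Th \<longleftrightarrow> (\<forall>V\<in>Th. hmax Th \<le> \<kappa> * cdiam V)"

definition bary :: "cell \<Rightarrow> pt" where
  "bary V = (1/3) *\<^sub>R (\<Sum>v\<in>V. v)"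

definition pd :: "(pt \<Rightarrow> 'b::real_normed_vector) \<Rightarrow> 2 \<Rightarrow> pt \<Rightarrow> 'b" where
  "pd f j x = frechet_derivative f (at x) (axis j 1)"

definition jac :: "(pt \<Rightarrow> real^3) \<Rightarrow> pt \<Rightarrow> mat32" where
  "jac f x = (\<chi> i j. pd f j x $ i)"

definition hess_sq :: "(pt \<Rightarrow> real^3) \<Rightarrow> pt \<Rightarrow> real" where
  "hess_sq f x = (\<Sum>k\<in>UNIV. \<Sum>j\<in>UNIV. \<Sum>l\<in>UNIV. (pd (\<lambda>z. pd f j z) l x $ k)\<^sup>2)"

definition frob :: "real^'n^'m \<Rightarrow> real^'n^'m \<Rightarrow> real" where
  "frob A B = (\<Sum>i\<in>UNIV. \<Sum>j\<in>UNIV. A $ i $ j * B $ i $ j)"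

definition stiefel32 :: "mat32 set" where
  "stiefel32 = {U. transpose U ** U = mat 1}"

definition P2 :: "(pt \<Rightarrow> real^3) set" where
  "P2 = {p. \<exists>(c::real^3) (a::2 \<Rightarrow> real^3) (b::2 \<Rightarrow> 2 \<Rightarrow> real^3). \<forall>x.
          p x = c + (\<Sum>i\<in>UNIV. x $ i *\<^sub>R a i) + (\<Sum>i\<in>UNIV. \<Sum>j\<in>UNIV. (x $ i * x $ j) *\<^sub>R b i j)}"

definition Vh :: "cell set \<Rightarrow> (cell \<Rightarrow> pt \<Rightarrow> real^3) set" where
  "Vh Th = {w. (\<forall>V\<in>Th. w V \<in> P2) \<and> (\<forall>V. V \<notin> Th \<longrightarrow> w V = (\<lambda>_. 0))}"

definition Mh :: "cell set \<Rightarrow> (cell \<Rightarrow> mat32) set" where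
  "Mh Th = {\<mu>. \<forall>V. V \<notin> Th \<longrightarrow> \<mu> V = 0}"

definition Yh :: "cell set \<Rightarrow> (cell \<Rightarrow> sym2) set" where
  "Yh Th = {\<gamma>. (\<forall>V\<in>Th. transpose (\<gamma> V) = \<gamma> V) \<and> (\<forall>V. V \<notin> Th \<longrightarrow> \<gamma> V = 0)}"

definition Ah :: "cell set \<Rightarrow> (cell \<Rightarrow> pt \<Rightarrow> real^3) set" where
  "Ah Th = {y \<in> Vh Th. \<forall>V\<in>Th. jac (y V) (bary V) \<in> stiefel32}"

definition bgrad :: "(cell \<Rightarrow> pt \<Rightarrow> real^3) \<Rightarrow> cell \<Rightarrow> pt \<Rightarrow> mat32" where
  "bgrad w V x = jac (w V) x"

definition ipY :: "cell set \<Rightarrow> (cell \<Rightarrow> sym2) \<Rightarrow> (cell \<Rightarrow> sym2) \<Rightarrow> real" where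
  "ipY Th \<gamma> \<zeta> = (\<Sum>V\<in>Th. integral (convex hull V) (\<lambda>x. frob (\<gamma> V) (\<zeta> V)))"

definition lh :: "cell set \<Rightarrow> (cell \<Rightarrow> pt \<Rightarrow> mat32) \<Rightarrow> (cell \<Rightarrow> pt \<Rightarrow> mat32) \<Rightarrow> (cell \<Rightarrow> sym2) \<Rightarrow> real" where
  "lh Th G M \<gamma> = (\<Sum>V\<in>Th. integral (convex hull V) (\<lambda>x. frob (\<gamma> V)
      (transpose (G V (bary V)) ** M V (bary V) + transpose (M V (bary V)) ** G V (bary V))))"

definition L1 :: "cell set \<Rightarrow> (cell \<Rightarrow> pt \<Rightarrow> real^3) \<Rightarrow> (cell \<Rightarrow> pt \<Rightarrow> real^3) \<Rightarrow> (cell \<Rightarrow> sym2)" where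
  "L1 Th y w = (THE g. g \<in> Yh Th \<and> (\<forall>\<gamma>\<in>Yh Th. ipY Th g \<gamma> = lh Th (bgrad y) (bgrad w) \<gamma>))"

definition L2 :: "cell set \<Rightarrow> (cell \<Rightarrow> pt \<Rightarrow> real^3) \<Rightarrow> (cell \<Rightarrow> mat32) \<Rightarrow> (cell \<Rightarrow> sym2)" where
  "L2 Th y \<mu> = (THE g. g \<in> Yh Th \<and> (\<forall>\<zeta>\<in>Yh Th. ipY Th g \<zeta> = lh Th (bgrad y) (\<lambda>V x. \<mu> V) \<zeta>))"

definition KerL1 :: "cell set \<Rightarrow> (cell \<Rightarrow> pt \<Rightarrow> real^3) \<Rightarrow> (cell \<Rightarrow> pt \<Rightarrow> real^3) set" where
  "KerL1 Th y = {w \<in> Vh Th. L1 Th y w = (\<lambda>_. 0)}"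

definition KerL2 :: "cell set \<Rightarrow> (cell \<Rightarrow> pt \<Rightarrow> real^3) \<Rightarrow> (cell \<Rightarrow> mat32) set" where
  "KerL2 Th y = {\<mu> \<in> Mh Th. L2 Th y \<mu> = (\<lambda>_. 0)}"

definition ipMgrad :: "cell set \<Rightarrow> (cell \<Rightarrow> mat32) \<Rightarrow> (cell \<Rightarrow> pt \<Rightarrow> real^3) \<Rightarrow> real" where
  "ipMgrad Th \<mu> w = (\<Sum>V\<in>Th. integral (convex hull V) (\<lambda>x. frob (\<mu> V) (bgrad w V x)))"

definition normM :: "cell set \<Rightarrow> (cell \<Rightarrow> mat32) \<Rightarrow> real" where
  "normM Th \<mu> = sqrt (\<Sum>V\<in>Th. integral (convex hull V) (\<lambda>x. frob (\<mu> V) (\<mu> V)))"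

definition seg_int :: "pt \<Rightarrow> pt \<Rightarrow> (pt \<Rightarrow> real) \<Rightarrow> real" where
  "seg_int a b g = dist a b * integral {0..1} (\<lambda>t. g (a + t *\<^sub>R (b - a)))"

definition unit_normal :: "pt \<Rightarrow> pt \<Rightarrow> pt" where
  "unit_normal a b = (1 / norm (b - a)) *\<^sub>R (\<chi> i. if i = 1 then - ((b - a) $ 2) else (b - a) $ 1)"

definition out_normal :: "cell \<Rightarrow> pt \<Rightarrow> pt \<Rightarrow> pt" where
  "out_normal V a b = (if unit_normal a b \<bullet> (bary V - a) < 0 then unit_normal a b else - unit_normal a b)"

text \<open>Interior edges: each interior edge E = V1 \<inter> V2 is visited as 2 ordered cell pairs and
  2 ordered endpoint pairs, hence the factors 1/2. The sign of the normal n_e is irrelevant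
  in the squared norm; we use the outward normal of V1.\<close>
definition int_jumps :: "cell set \<Rightarrow> (cell \<Rightarrow> pt \<Rightarrow> real^3) \<Rightarrow> real" where
  "int_jumps Th w = (let h = hmax Th in
     (\<Sum>(V1, V2)\<in>{(V1, V2). V1 \<in> Th \<and> V2 \<in> Th \<and> V1 \<noteq> V2 \<and> card (V1 \<inter> V2) = 2}.
        (1/2) * (1/2) * (\<Sum>a\<in>V1 \<inter> V2. \<Sum>b\<in>(V1 \<inter> V2) - {a}. seg_int a b (\<lambda>x.
           h powr (-1) * (norm ((jac (w V1) x - jac (w V2) x) *v out_normal V1 a b))\<^sup>2
         + h powr (-3) * (norm (w V1 x - w V2 x))\<^sup>2))))"

definition bdry_jumps :: "pt set \<Rightarrow> cell set \<Rightarrow> (cell \<Rightarrow> pt \<Rightarrow> real^3) \<Rightarrow> real" where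
  "bdry_jumps \<Gamma>D Th w = (let h = hmax Th in
     (\<Sum>(V, E)\<in>{(V, E). V \<in> Th \<and> E \<subseteq> V \<and> card E = 2 \<and> (\<forall>a\<in>E. \<forall>b\<in>E. open_segment a b \<subseteq> \<Gamma>D)}.
        (1/2) * (\<Sum>a\<in>E. \<Sum>b\<in>E - {a}. seg_int a b (\<lambda>x.
           h powr (-1) * (norm (jac (w V) x *v out_normal V a b))\<^sup>2
         + h powr (-3) * (norm (w V x))\<^sup>2))))"

definition normH2h :: "pt set \<Rightarrow> cell set \<Rightarrow> (cell \<Rightarrow> pt \<Rightarrow> real^3) \<Rightarrow> real" where
  "normH2h \<Gamma>D Th w = sqrt ((\<Sum>V\<in>Th. integral (convex hull V) (hess_sq (w V)))
                             + int_jumps Th w + bdry_jumps \<Gamma>D Th w)"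

end

theory Submission
  imports Defs
begin

text \<open>
  Given \<open>\<mu>\<close> in the kernel of \<open>L\<^sub>2\<close>, put on each cell \<open>T\<close> the quadratic bubble
  \<open>w(x) = \<mu>\<^sub>T (x - x\<^sub>T) + (|\<mu>\<^sub>T| / h) |x - x\<^sub>T|\<^sup>2 e\<^sub>T\<close>,
  where \<open>e\<^sub>T\<close> is a unit vector orthogonal to the two columns of \<open>\<mu>\<^sub>T\<close>.
  Its gradient at the barycentre is \<open>\<mu>\<^sub>T\<close>, and \<open>l\<^sub>h\<close> only sees gradients at barycentres,
  so \<open>L\<^sub>1 w = L\<^sub>2 \<mu> = 0\<close> whatever \<open>y\<close> is. Orthogonality of \<open>e\<^sub>T\<close> gives
  \<open>(\<mu>, \<nabla>\<^sub>h w) = \<parallel>\<mu>\<parallel>\<^sup>2 \<ge> c h\<^sub>m\<^sub>i\<^sub>n\<^sup>2 \<Sum> |\<mu>\<^sub>T|\<^sup>2\<close> by shape regularity. On the other hand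
  \<open>|w| \<le> 3 h |\<mu>\<^sub>T|\<close> and \<open>|\<nabla>w| \<le> 3 |\<mu>\<^sub>T|\<close> on \<open>T\<close>, and a packing argument bounds the number
  of edge neighbours of a cell, so \<open>\<parallel>w\<parallel>\<^sub>H\<^sub>2\<^sub>h\<^sup>2 \<le> C \<Sum> |\<mu>\<^sub>T|\<^sup>2\<close>; the quotient is therefore
  at least \<open>\<beta>' h\<^sub>m\<^sub>i\<^sub>n\<close>. The quadratic term is what makes \<open>\<parallel>w\<parallel>\<^sub>H\<^sub>2\<^sub>h\<close> positive when no
  jump terms are present (otherwise the quotient would be a division by zero).
\<close>

section \<open>A quadratic bubble with prescribed gradient\<close>

lemma frob_eq_inner: "frob A B = A \<bullet> B"
  by (simp add: frob_def inner_vec_def)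

lemma norm_matrix_vector_mult_le:
  fixes A :: "real^'n^'m"
  shows "norm (A *v x) \<le> norm A * norm x"
proof -
  have "(norm (A *v x))\<^sup>2 = (\<Sum>i\<in>UNIV. (A $ i \<bullet> x)\<^sup>2)"
    by (simp add: norm_vec_def L2_set_def sum_nonneg matrix_vector_mul_component)
  also have "\<dots> \<le> (\<Sum>i\<in>UNIV. (norm (A $ i) * norm x)\<^sup>2)"
    by (intro sum_mono abs_le_square_iff[THEN iffD1]) (simp add: Cauchy_Schwarz_ineq2)
  also have "\<dots> = (norm A * norm x)\<^sup>2"
    by (simp add: norm_vec_def L2_set_def sum_nonneg power_mult_distrib sum_distrib_right)
  finally show ?thesis
    by (rule power2_le_imp_le) simp
qed

lemma unit_vector_orthogonal_to_columns:
  fixes A :: "real^'n^'m"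
  assumes "CARD('n) < CARD('m)"
  shows "\<exists>e. norm e = 1 \<and> (\<forall>j. column j A \<bullet> e = 0)"
proof -
  let ?C = "range (\<lambda>j. column j A)"
  have "dim ?C \<le> card ?C"
    by (rule dim_le_card) (auto intro: span_base)
  also have "\<dots> \<le> CARD('n)"
    by (rule card_image_le) simp
  finally have "dim ?C < DIM(real^'m)"
    using assms by simp
  then obtain x where x: "x \<noteq> 0" "\<And>y. y \<in> span ?C \<Longrightarrow> orthogonal x y"
    by (rule orthogonal_to_subspace_exists) blast+
  have "column j A \<bullet> (x /\<^sub>R norm x) = 0" for j
    using x(2)[OF span_base[of "column j A"]] by (simp add: orthogonal_def inner_commute)
  moreover have "norm (x /\<^sub>R norm x) = 1"
    using x(1) by simp
  ultimately show ?thesis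
    by blast
qed

definition column_normal :: "real^'n^'m \<Rightarrow> real^'m" where
  "column_normal A = (SOME e. norm e = 1 \<and> (\<forall>j. column j A \<bullet> e = 0))"

lemma column_normal:
  fixes A :: "real^'n^'m"
  assumes "CARD('n) < CARD('m)"
  shows "norm (column_normal A) = 1" and "column j A \<bullet> column_normal A = 0"
  using someI_ex[OF unit_vector_orthogonal_to_columns[OF assms, of A]]
  unfolding column_normal_def by auto

definition bubble :: "real^'n^'m \<Rightarrow> real^'m \<Rightarrow> real^'n \<Rightarrow> real \<Rightarrow> real^'n \<Rightarrow> real^'m" where
  "bubble A e b c x = A *v (x - b) + (c * ((x - b) \<bullet> (x - b))) *\<^sub>R e"

lemma bubble_has_derivative:
  "(bubble A e b c has_derivative (\<lambda>h. A *v h + (2 * c * ((x - b) \<bullet> h)) *\<^sub>R e)) (at x)"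
  unfolding bubble_def
  by (rule derivative_eq_intros bounded_linear.has_derivative[OF matrix_vector_mul_bounded_linear] refl
      | simp add: inner_commute algebra_simps)+

lemma pd_bubble: "pd (bubble A e b c) j x = column j A + (2 * c * (x - b) $ j) *\<^sub>R e"
  unfolding pd_def frechet_derivative_at[OF bubble_has_derivative, symmetric]
  by (simp add: matrix_vector_mult_basis inner_axis)

lemma pd_pd_bubble: "pd (\<lambda>z. pd (bubble A e b c) j z) l x = (if l = j then 2 * c else 0) *\<^sub>R e"
proof -
  have "((\<lambda>z. pd (bubble A e b c) j z) has_derivative (\<lambda>h. (2 * c * h $ j) *\<^sub>R e)) (at x)"
    unfolding pd_bubble
    by (rule derivative_eq_intros bounded_linear.has_derivative[OF bounded_linear_vec_nth] refl | simp)+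
  then show ?thesis
    by (simp add: pd_def[of "\<lambda>z. pd (bubble A e b c) j z"] frechet_derivative_at[symmetric] axis_def)
qed

lemma jac_bubble: "jac (bubble A e b c) x = A + (\<chi> i j. 2 * c * (x - b) $ j * e $ i)"
  by (simp add: jac_def pd_bubble column_def vec_eq_iff)

lemma jac_bubble_center: "jac (bubble A e b c) b = A"
  by (simp add: jac_bubble vec_eq_iff)

lemma jac_bubble_mult: "jac (bubble A e b c) x *v n = A *v n + (2 * c * ((x - b) \<bullet> n)) *\<^sub>R e"
proof -
  have "(\<chi> i j. 2 * c * (x - b) $ j * e $ i) *v n = (2 * c * ((x - b) \<bullet> n)) *\<^sub>R e"
    by (simp add: vec_eq_iff matrix_vector_mult_def inner_vec_def sum_distrib_left mult_ac)
  then show ?thesis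
    by (simp add: jac_bubble matrix_vector_mult_add_rdistrib)
qed

lemma frob_jac_bubble:
  assumes "\<And>j. column j A \<bullet> e = 0"
  shows "frob A (jac (bubble A e b c) x) = (norm A)\<^sup>2"
proof -
  have "A \<bullet> (\<chi> i j. 2 * c * (x - b) $ j * e $ i) = (\<Sum>j\<in>UNIV. 2 * c * (x - b) $ j * (column j A \<bullet> e))"
    unfolding inner_vec_def column_def sum_distrib_left
    by (subst sum.swap) (simp add: mult_ac)
  then show ?thesis
    by (simp add: frob_eq_inner jac_bubble inner_add_right assms power2_norm_eq_inner)
qed

lemma hess_sq_bubble:
  assumes "norm e = 1"
  shows "hess_sq (bubble A e b c) = (\<lambda>_. 8 * c\<^sup>2)"
proof
  fix x
  have "hess_sq (bubble A e b c) x = (\<Sum>k\<in>UNIV. 2 * (2 * c * e $ k)\<^sup>2)"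
    by (simp add: hess_sq_def pd_pd_bubble UNIV_2)
  also have "\<dots> = 8 * c\<^sup>2 * (norm e)\<^sup>2"
    by (simp add: norm_vec_def L2_set_def sum_nonneg sum_distrib_left power_mult_distrib mult_ac)
  finally show "hess_sq (bubble A e b c) x = 8 * c\<^sup>2"
    using assms by simp
qed

lemma norm_bubble_le:
  assumes "norm e = 1"
  shows "norm (bubble A e b c x) \<le> norm A * norm (x - b) + \<bar>c\<bar> * (norm (x - b))\<^sup>2"
proof -
  have "norm (bubble A e b c x) \<le> norm (A *v (x - b)) + \<bar>c\<bar> * (norm (x - b))\<^sup>2"
    using norm_triangle_ineq[of "A *v (x - b)" "(c * ((x - b) \<bullet> (x - b))) *\<^sub>R e"] assms
    by (simp add: bubble_def abs_mult power2_norm_eq_inner)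
  then show ?thesis
    using norm_matrix_vector_mult_le[of A "x - b"] by linarith
qed

lemma norm_jac_bubble_mult_le:
  assumes "norm e = 1"
  shows "norm (jac (bubble A e b c) x *v n) \<le> (norm A + 2 * \<bar>c\<bar> * norm (x - b)) * norm n"
proof -
  have "norm (jac (bubble A e b c) x *v n) \<le> norm (A *v n) + 2 * \<bar>c\<bar> * \<bar>(x - b) \<bullet> n\<bar>"
    using norm_triangle_ineq[of "A *v n" "(2 * c * ((x - b) \<bullet> n)) *\<^sub>R e"] assms
    by (simp add: jac_bubble_mult abs_mult)
  also have "\<dots> \<le> norm A * norm n + 2 * \<bar>c\<bar> * (norm (x - b) * norm n)"
    by (intro add_mono mult_left_mono norm_matrix_vector_mult_le Cauchy_Schwarz_ineq2) auto
  finally show ?thesis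
    by (simp add: algebra_simps)
qed

lemma bubble_in_P2: "bubble A e b c \<in> P2"
proof -
  define a where "a i = column i A - (2 * c * b $ i) *\<^sub>R e" for i
  define q where "q i j = (if i = j then c else 0) *\<^sub>R e" for i j :: 2
  have lin: "(\<Sum>i\<in>UNIV. x $ i *\<^sub>R a i) = A *v x - (2 * c * (b \<bullet> x)) *\<^sub>R e" for x
    by (simp add: a_def scaleR_diff_right sum_subtractf matrix_mult_sum scalar_mult_eq_scaleR
        inner_vec_def scaleR_sum_left sum_distrib_left mult_ac)
  have quad: "(\<Sum>i\<in>UNIV. \<Sum>j\<in>UNIV. (x $ i * x $ j) *\<^sub>R q i j) = (c * (x \<bullet> x)) *\<^sub>R e" for x
    by (simp add: q_def inner_vec_def UNIV_2 scaleR_add_left algebra_simps)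
  have "bubble A e b c x = (c * (b \<bullet> b)) *\<^sub>R e - A *v b + (\<Sum>i\<in>UNIV. x $ i *\<^sub>R a i)
      + (\<Sum>i\<in>UNIV. \<Sum>j\<in>UNIV. (x $ i * x $ j) *\<^sub>R q i j)" for x
    unfolding lin quad bubble_def
    by (simp add: matrix_vector_mult_diff_distrib inner_diff inner_commute algebra_simps)
  then show ?thesis
    unfolding P2_def by blast
qed

section \<open>Triangles and triangulations\<close>

lemma is_triangle_finite: "is_triangle V \<Longrightarrow> finite V"
  unfolding is_triangle_def by (metis card.infinite zero_neq_numeral)

lemma compact_triangle: "is_triangle V \<Longrightarrow> compact (convex hull V)"
  by (simp add: is_triangle_finite compact_convex_hull finite_imp_compact)

lemma bounded_triangle: "is_triangle V \<Longrightarrow> bounded (convex hull V)"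
  by (simp add: compact_triangle compact_imp_bounded)

lemma lmeasurable_triangle: "is_triangle V \<Longrightarrow> convex hull V \<in> lmeasurable"
  by (simp add: compact_triangle lmeasurable_compact)

lemma dist_le_cdiam:
  "is_triangle V \<Longrightarrow> x \<in> convex hull V \<Longrightarrow> y \<in> convex hull V \<Longrightarrow> dist x y \<le> cdiam V"
  unfolding cdiam_def by (rule diameter_bounded_bound[OF bounded_triangle])

lemma bary_in_triangle: "is_triangle V \<Longrightarrow> bary V \<in> convex hull V"
  unfolding bary_def is_triangle_def scaleR_sum_right
  by (intro convex_sum) (auto simp: card_ge_0_finite hull_inc)

lemma cdiam_pos: "is_triangle V \<Longrightarrow> 0 < cdiam V"
proof -
  assume V: "is_triangle V"
  then obtain a b c where "V = {a, b, c}" "a \<noteq> b"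
    by (auto simp: is_triangle_def card_3_iff)
  then have "0 < dist a b" "dist a b \<le> cdiam V"
    using V by (auto intro: dist_le_cdiam hull_inc)
  then show ?thesis
    by linarith
qed

lemma area_cball: "0 \<le> r \<Longrightarrow> measure lebesgue (cball (x::real^2) r) = pi * r\<^sup>2"
  by (simp add: measure_completion content_cball_conv_ball circle_area)

lemma integral_const_lmeasurable:
  assumes "S \<in> lmeasurable"
  shows "integral S (\<lambda>x. c) = c * measure lebesgue S"
proof -
  have "integral S (\<lambda>x. c * 1) = c * integral S (\<lambda>x. 1::real)"
    by (rule integral_mult_right)
  then show ?thesis
    using lmeasure_integral[OF assms] by simp
qed

lemma area_triangle_le: "is_triangle V \<Longrightarrow> measure lebesgue (convex hull V) \<le> pi * (cdiam V)\<^sup>2"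
proof -
  assume V: "is_triangle V"
  then obtain v where v: "v \<in> V"
    by (fastforce simp: is_triangle_def)
  have "convex hull V \<subseteq> cball v (cdiam V)"
    using V v by (auto simp: dist_commute intro!: dist_le_cdiam hull_inc)
  then have "measure lebesgue (convex hull V) \<le> measure lebesgue (cball v (cdiam V))"
    by (intro measure_mono_fmeasurable) (auto simp: V lmeasurable_triangle fmeasurableD)
  also have "\<dots> = pi * (cdiam V)\<^sup>2"
    using area_cball[of "cdiam V" v] cdiam_pos[OF V] by linarith
  finally show ?thesis .
qed

lemma inradius_bounds:
  assumes "is_triangle V"
  shows "bdd_above {r. \<exists>x. cball x r \<subseteq> convex hull V}"
    and "{r. \<exists>x. cball x r \<subseteq> convex hull V} \<noteq> {}" and "0 \<le> inradius V"
proof -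
  let ?R = "{r. \<exists>x. cball x r \<subseteq> convex hull V}"
  have "r \<le> cdiam V" if "r \<in> ?R" for r
  proof (cases "r < 0")
    case False
    from that obtain x where "cball x r \<subseteq> convex hull V"
      by auto
    then have "diameter (cball x r) \<le> cdiam V"
      unfolding cdiam_def by (rule diameter_subset[OF _ bounded_triangle[OF assms]])
    with False show ?thesis
      by simp
  qed (use cdiam_pos[OF assms] in simp)
  then show bdd: "bdd_above ?R"
    by (rule bdd_aboveI)
  obtain v where "v \<in> V"
    using assms by (fastforce simp: is_triangle_def)
  then have "0 \<in> ?R"
    by (auto intro!: exI[of _ v] hull_inc)
  then show "?R \<noteq> {}"
    by blast
  from \<open>0 \<in> ?R\<close> show "0 \<le> inradius V"
    unfolding inradius_def by (rule cSup_upper[OF _ bdd])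
qed

lemma area_triangle_ge_inradius:
  assumes "is_triangle V"
  shows "pi * (inradius V / 2)\<^sup>2 \<le> measure lebesgue (convex hull V)"
proof (cases "inradius V = 0")
  case False
  then have "inradius V / 2 < Sup {r. \<exists>x. cball x r \<subseteq> convex hull V}"
    using inradius_bounds(3)[OF assms] by (simp add: inradius_def)
  then obtain r x where "inradius V / 2 < r" "cball x r \<subseteq> convex hull V"
    by (rule less_cSupE[OF _ inradius_bounds(2)[OF assms]]) blast
  then have "cball x (inradius V / 2) \<subseteq> convex hull V"
    by (meson order.trans order.strict_implies_order subset_cball)
  then have "measure lebesgue (cball x (inradius V / 2)) \<le> measure lebesgue (convex hull V)"
    by (intro measure_mono_fmeasurable) (auto simp: assms lmeasurable_triangle fmeasurableD)
  then show ?thesis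
    using area_cball[of "inradius V / 2" x] inradius_bounds(3)[OF assms] by simp
qed simp

lemma area_triangle_ge_cdiam:
  assumes "is_triangle V" and "cdiam V \<le> \<sigma> * inradius V"
  shows "0 < \<sigma>" and "pi * (cdiam V / (2 * \<sigma>))\<^sup>2 \<le> measure lebesgue (convex hull V)"
proof -
  have "0 < \<sigma> * inradius V"
    using assms(2) cdiam_pos[OF assms(1)] by linarith
  then show \<sigma>: "0 < \<sigma>"
    using inradius_bounds(3)[OF assms(1)] by (simp add: zero_less_mult_iff)
  have "cdiam V / (2 * \<sigma>) \<le> inradius V / 2"
    using assms(2) \<sigma> by (simp add: field_simps)
  then have "pi * (cdiam V / (2 * \<sigma>))\<^sup>2 \<le> pi * (inradius V / 2)\<^sup>2"
    using cdiam_pos[OF assms(1)] \<sigma> by (intro mult_left_mono power_mono) auto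
  then show "pi * (cdiam V / (2 * \<sigma>))\<^sup>2 \<le> measure lebesgue (convex hull V)"
    using area_triangle_ge_inradius[OF assms(1)] by linarith
qed

lemma triangulation_finite: "triangulation \<Omega> Th \<Longrightarrow> finite Th"
  by (simp add: triangulation_def)

lemma triangulation_triangle: "triangulation \<Omega> Th \<Longrightarrow> V \<in> Th \<Longrightarrow> is_triangle V"
  by (simp add: triangulation_def)

lemma cdiam_le_hmax: "triangulation \<Omega> Th \<Longrightarrow> V \<in> Th \<Longrightarrow> cdiam V \<le> hmax Th"
  unfolding hmax_def by (simp add: triangulation_finite)

lemma hmin_le_cdiam: "triangulation \<Omega> Th \<Longrightarrow> V \<in> Th \<Longrightarrow> hmin Th \<le> cdiam V"
  unfolding hmin_def by (simp add: triangulation_finite)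

lemma hmin_attained: "triangulation \<Omega> Th \<Longrightarrow> \<exists>V\<in>Th. hmin Th = cdiam V"
proof -
  assume "triangulation \<Omega> Th"
  then have "hmin Th \<in> cdiam ` Th"
    unfolding hmin_def triangulation_def by (intro Min_in) auto
  then show ?thesis
    by auto
qed

lemma hmin_pos: "triangulation \<Omega> Th \<Longrightarrow> 0 < hmin Th"
  by (metis hmin_attained triangulation_triangle cdiam_pos)

lemma hmax_pos: "triangulation \<Omega> Th \<Longrightarrow> 0 < hmax Th"
  by (metis hmin_attained triangulation_triangle cdiam_pos cdiam_le_hmax order.strict_trans2)

lemma negligible_cell_inter:
  assumes tr: "triangulation \<Omega> Th" and "V \<in> Th" "V' \<in> Th" "V \<noteq> V'"
  shows "negligible (convex hull V \<inter> convex hull V')"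
proof -
  have V: "is_triangle V" and V': "is_triangle V'"
    using assms triangulation_triangle by auto
  have "card (V \<inter> V') \<noteq> 3"
  proof
    assume "card (V \<inter> V') = 3"
    then have "V \<inter> V' = V" and "V \<inter> V' = V'"
      using card_subset_eq[of V "V \<inter> V'"] card_subset_eq[of V' "V \<inter> V'"] V V'
      by (auto simp: is_triangle_def is_triangle_finite)
    with \<open>V \<noteq> V'\<close> show False
      by simp
  qed
  moreover have "card (V \<inter> V') \<le> 3"
    using card_mono[of V "V \<inter> V'"] V by (auto simp: is_triangle_def is_triangle_finite)
  ultimately have "interior (convex hull (V \<inter> V')) = {}"
    using V by (intro empty_interior_convex_hull) (auto simp: is_triangle_finite)
  moreover have "convex hull V \<inter> convex hull V' = convex hull (V \<inter> V')"
    using tr assms unfolding triangulation_def by blast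
  ultimately show ?thesis
    by (simp add: negligible_convex_interior)
qed

definition edge_neighbours :: "cell set \<Rightarrow> cell \<Rightarrow> cell set" where
  "edge_neighbours Th V = {V' \<in> Th. V' \<noteq> V \<and> card (V \<inter> V') = 2}"

lemma card_edge_neighbours_area:
  assumes tr: "triangulation \<Omega> Th" and V: "V \<in> Th"
    and amin: "\<And>V'. V' \<in> Th \<Longrightarrow> amin \<le> measure lebesgue (convex hull V')"
  shows "real (card (edge_neighbours Th V)) * amin \<le> pi * (2 * hmax Th)\<^sup>2"
proof -
  let ?N = "edge_neighbours Th V"
  have N: "?N \<subseteq> Th" "finite ?N"
    using triangulation_finite[OF tr] by (auto simp: edge_neighbours_def)
  have tri: "\<And>V'. V' \<in> Th \<Longrightarrow> is_triangle V'"
    using tr triangulation_triangle by blast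
  have "real (card ?N) * amin \<le> (\<Sum>V'\<in>?N. measure lebesgue (convex hull V'))"
    by (rule sum_bounded_below) (use N amin in auto)
  also have "\<dots> = measure lebesgue (\<Union>V'\<in>?N. convex hull V')"
  proof (rule measure_negligible_finite_Union_image[symmetric])
    show "pairwise (\<lambda>V' V''. negligible (convex hull V' \<inter> convex hull V'')) ?N"
      unfolding pairwise_def using N negligible_cell_inter[OF tr] by blast
  qed (use N tri in \<open>auto simp: lmeasurable_triangle\<close>)
  also have "\<dots> \<le> measure lebesgue (cball (bary V) (2 * hmax Th))"
  proof (intro measure_mono_fmeasurable subsetI)
    fix x
    assume "x \<in> (\<Union>V'\<in>?N. convex hull V')"
    then obtain V' where V': "V' \<in> ?N" "x \<in> convex hull V'"
      by blast
    then have "V \<inter> V' \<noteq> {}"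
      by (auto simp: edge_neighbours_def)
    then obtain p where p: "p \<in> V" "p \<in> V'"
      by blast
    have "dist (bary V) p \<le> hmax Th"
      using dist_le_cdiam[OF tri[OF V] bary_in_triangle[OF tri[OF V]]] cdiam_le_hmax[OF tr V] p
      by (meson hull_inc order.trans)
    moreover have "dist p x \<le> hmax Th"
      using dist_le_cdiam[OF tri] cdiam_le_hmax[OF tr] V' p N
      by (meson hull_inc order.trans subsetD)
    ultimately show "x \<in> cball (bary V) (2 * hmax Th)"
      using dist_triangle[of "bary V" x p] by (simp add: dist_commute)
  qed (use N tri in \<open>auto intro!: fmeasurableD lmeasurable_compact compact_UN compact_triangle\<close>)
  also have "\<dots> = pi * (2 * hmax Th)\<^sup>2"
    using area_cball[of "2 * hmax Th" "bary V"] hmax_pos[OF tr] by linarith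
  finally show ?thesis .
qed

lemma shape_regular_area:
  assumes tr: "triangulation \<Omega> Th" and sr: "shape_regular \<sigma> Th" and V: "V \<in> Th"
  shows "0 < \<sigma>" and "pi * (hmin Th / (2 * \<sigma>))\<^sup>2 \<le> measure lebesgue (convex hull V)"
proof -
  note V_area = area_triangle_ge_cdiam[OF triangulation_triangle[OF tr V]]
  show \<sigma>: "0 < \<sigma>"
    using V_area(1) sr V by (simp add: shape_regular_def)
  have "pi * (hmin Th / (2 * \<sigma>))\<^sup>2 \<le> pi * (cdiam V / (2 * \<sigma>))\<^sup>2"
    using hmin_le_cdiam[OF tr V] hmin_pos[OF tr] \<sigma>
    by (intro mult_left_mono power_mono divide_right_mono) auto
  also have "\<dots> \<le> measure lebesgue (convex hull V)"
    using V_area(2) sr V by (simp add: shape_regular_def)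
  finally show "pi * (hmin Th / (2 * \<sigma>))\<^sup>2 \<le> measure lebesgue (convex hull V)" .
qed

lemma card_edge_neighbours_le:
  assumes tr: "triangulation \<Omega> Th" and sr: "shape_regular \<sigma> Th" and qu: "quasi_uniform \<kappa> Th"
    and V: "V \<in> Th"
  shows "real (card (edge_neighbours Th V)) \<le> (4 * \<sigma> * \<kappa>)\<^sup>2"
proof -
  let ?c = "real (card (edge_neighbours Th V))"
  have \<sigma>: "0 < \<sigma>" and hm: "0 < hmin Th"
    using shape_regular_area(1)[OF tr sr V] hmin_pos[OF tr] .
  obtain V0 where "V0 \<in> Th" "hmin Th = cdiam V0"
    using hmin_attained[OF tr] by blast
  then have "hmax Th \<le> \<kappa> * hmin Th"
    using qu by (simp add: quasi_uniform_def)
  then have H: "(hmax Th)\<^sup>2 \<le> (\<kappa> * hmin Th)\<^sup>2"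
    using hmax_pos[OF tr] by (intro power_mono) auto
  have "?c * (pi * (hmin Th / (2 * \<sigma>))\<^sup>2) \<le> pi * (2 * hmax Th)\<^sup>2"
    using card_edge_neighbours_area[OF tr V shape_regular_area(2)[OF tr sr]] .
  then have "?c * (hmin Th)\<^sup>2 \<le> (4 * \<sigma>)\<^sup>2 * (hmax Th)\<^sup>2"
    using \<sigma> by (simp add: power_divide power_mult_distrib field_simps)
  also have "\<dots> \<le> (4 * \<sigma> * \<kappa>)\<^sup>2 * (hmin Th)\<^sup>2"
    using mult_left_mono[OF H, of "(4 * \<sigma>)\<^sup>2"] by (simp add: power_mult_distrib mult_ac)
  finally show ?thesis
    using hm by simp
qed

section \<open>Jump terms of the broken H2 norm\<close>

lemma norm_out_normal_le: "norm (out_normal V a b) \<le> 1"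
proof -
  let ?d = "b - a"
  have "norm ((\<chi> i. if i = 1 then - (?d $ 2) else ?d $ 1) :: pt) = norm ?d"
    unfolding norm_vec_def L2_set_def sum_2 by (simp add: add.commute power2_commute)
  then have "norm (unit_normal a b) \<le> 1"
    by (cases "a = b") (simp_all add: unit_normal_def)
  then show ?thesis
    by (simp add: out_normal_def)
qed

lemma segment_in_triangle:
  assumes "a \<in> V" "b \<in> V" "t \<in> {0..1}"
  shows "a + t *\<^sub>R (b - a) \<in> convex hull V"
proof -
  have "(1 - t) *\<^sub>R a + t *\<^sub>R b \<in> convex hull V"
    using assms by (intro convexD[OF convex_convex_hull]) (auto intro: hull_inc)
  then show ?thesis
    by (simp add: algebra_simps)
qed

lemma seg_int_nonneg:
  assumes "\<And>t. t \<in> {0..1} \<Longrightarrow> 0 \<le> g (a + t *\<^sub>R (b - a))"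
  shows "0 \<le> seg_int a b g"
proof (cases "(\<lambda>t. g (a + t *\<^sub>R (b - a))) integrable_on {0..1}")
  case True
  then show ?thesis
    unfolding seg_int_def using assms by (intro mult_nonneg_nonneg zero_le_dist integral_nonneg) auto
qed (simp add: seg_int_def not_integrable_integral)

lemma seg_int_le:
  assumes "dist a b \<le> H" "0 \<le> B" "\<And>t. t \<in> {0..1} \<Longrightarrow> g (a + t *\<^sub>R (b - a)) \<le> B"
  shows "seg_int a b g \<le> H * B"
proof -
  have "integral {0..1} (\<lambda>t. g (a + t *\<^sub>R (b - a))) \<le> B"
  proof (cases "(\<lambda>t. g (a + t *\<^sub>R (b - a))) integrable_on {0..1}")
    case True
    then show ?thesis
      using integral_le[OF True integrable_const_ivl[of B 0 1]] assms(3) by simp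
  qed (simp add: not_integrable_integral assms(2))
  then have "seg_int a b g \<le> dist a b * B"
    unfolding seg_int_def by (intro mult_left_mono) auto
  also have "\<dots> \<le> H * B"
    using assms(1,2) by (intro mult_right_mono)
  finally show ?thesis .
qed

lemma seg_int_jump_le:
  assumes H: "0 < H" and ab: "dist a b \<le> H" and P: "0 \<le> P"
    and M: "\<And>t. t \<in> {0..1} \<Longrightarrow> norm (M (a + t *\<^sub>R (b - a))) \<le> P"
    and v: "\<And>t. t \<in> {0..1} \<Longrightarrow> norm (v (a + t *\<^sub>R (b - a))) \<le> H * P"
  shows "seg_int a b (\<lambda>x. H powr (-1) * (norm (M x))\<^sup>2 + H powr (-3) * (norm (v x))\<^sup>2) \<le> 2 * P\<^sup>2"
proof -
  have "H powr (-1) * (norm (M x))\<^sup>2 + H powr (-3) * (norm (v x))\<^sup>2 \<le> 2 * P\<^sup>2 / H"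
    if "x = a + t *\<^sub>R (b - a)" "t \<in> {0..1}" for x t
  proof -
    have "(norm (M x))\<^sup>2 \<le> P\<^sup>2" "(norm (v x))\<^sup>2 \<le> H\<^sup>2 * P\<^sup>2"
      using M v that by (auto intro!: power_mono simp flip: power_mult_distrib)
    then have "(norm (M x))\<^sup>2 / H + (norm (v x))\<^sup>2 / H ^ 3 \<le> P\<^sup>2 / H + H\<^sup>2 * P\<^sup>2 / H ^ 3"
      using H by (intro add_mono divide_right_mono) auto
    also have "\<dots> = 2 * P\<^sup>2 / H"
      using H by (simp add: field_simps power2_eq_square power3_eq_cube)
    finally show ?thesis
      using H by (simp add: powr_minus_divide powr_numeral)
  qed
  then have "seg_int a b (\<lambda>x. H powr (-1) * (norm (M x))\<^sup>2 + H powr (-3) * (norm (v x))\<^sup>2) \<le> H * (2 * P\<^sup>2 / H)"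
    using H by (intro seg_int_le[OF ab]) auto
  then show ?thesis
    using H by simp
qed

lemma sum_offdiag_le:
  fixes g :: "'a \<Rightarrow> 'a \<Rightarrow> real"
  assumes "finite E" and "\<And>a b. a \<in> E \<Longrightarrow> b \<in> E - {a} \<Longrightarrow> g a b \<le> B"
  shows "(\<Sum>a\<in>E. \<Sum>b\<in>E - {a}. g a b) \<le> real (card E) * (real (card E) - 1) * B"
proof -
  have "(\<Sum>a\<in>E. \<Sum>b\<in>E - {a}. g a b) \<le> (\<Sum>a\<in>E. real (card (E - {a})) * B)"
    using assms by (intro sum_mono sum_bounded_above) auto
  also have "\<dots> = (\<Sum>a\<in>E. (real (card E) - 1) * B)"
    using assms(1) card_Suc_Diff1[OF assms(1)] by (intro sum.cong) (auto simp: of_nat_diff)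
  finally show ?thesis
    by (simp add: mult.assoc)
qed

definition cellwise_C1_bound :: "cell set \<Rightarrow> (cell \<Rightarrow> pt \<Rightarrow> real^3) \<Rightarrow> (cell \<Rightarrow> real) \<Rightarrow> bool" where
  "cellwise_C1_bound Th w m \<longleftrightarrow> (\<forall>V\<in>Th. 0 \<le> m V \<and> (\<forall>x\<in>convex hull V.
     norm (w V x) \<le> hmax Th * m V \<and> (\<forall>n. norm n \<le> 1 \<longrightarrow> norm (jac (w V) x *v n) \<le> m V)))"

lemma int_jump_pair_le:
  assumes tr: "triangulation \<Omega> Th" and w: "cellwise_C1_bound Th w m"
    and V: "V1 \<in> Th" "V2 \<in> Th" "card (V1 \<inter> V2) = 2"
  shows "1 / 2 * (1 / 2) * (\<Sum>a\<in>V1 \<inter> V2. \<Sum>b\<in>V1 \<inter> V2 - {a}. seg_int a b (\<lambda>x.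
           hmax Th powr (-1) * (norm ((jac (w V1) x - jac (w V2) x) *v out_normal V1 a b))\<^sup>2
         + hmax Th powr (-3) * (norm (w V1 x - w V2 x))\<^sup>2)) \<le> 2 * ((m V1)\<^sup>2 + (m V2)\<^sup>2)"
proof -
  let ?H = "hmax Th" and ?P = "m V1 + m V2"
  let ?seg = "\<lambda>a b. seg_int a b (\<lambda>x.
           ?H powr (-1) * (norm ((jac (w V1) x - jac (w V2) x) *v out_normal V1 a b))\<^sup>2
         + ?H powr (-3) * (norm (w V1 x - w V2 x))\<^sup>2)"
  have seg: "?seg a b \<le> 2 * ?P\<^sup>2" if ab: "a \<in> V1 \<inter> V2" "b \<in> V1 \<inter> V2 - {a}" for a b
  proof (rule seg_int_jump_le[OF hmax_pos[OF tr]])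
    show "dist a b \<le> ?H"
      using ab dist_le_cdiam[OF triangulation_triangle[OF tr V(1)]] cdiam_le_hmax[OF tr V(1)]
      by (meson DiffD1 IntD1 hull_inc order.trans)
    show "0 \<le> ?P"
      using w V by (simp add: cellwise_C1_bound_def)
    fix t :: real
    assume "t \<in> {0..1}"
    define x where "x = a + t *\<^sub>R (b - a)"
    have x: "x \<in> convex hull V1" "x \<in> convex hull V2"
      using ab \<open>t \<in> {0..1}\<close> by (auto simp: x_def intro!: segment_in_triangle)
    let ?n = "out_normal V1 a b"
    have "norm (jac (w V1) x *v ?n) \<le> m V1" "norm (jac (w V2) x *v ?n) \<le> m V2"
      "norm (w V1 x) \<le> ?H * m V1" "norm (w V2 x) \<le> ?H * m V2"
      using w V x norm_out_normal_le unfolding cellwise_C1_bound_def by blast+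
    then show "norm ((jac (w V1) x - jac (w V2) x) *v ?n) \<le> ?P"
      and "norm (w V1 x - w V2 x) \<le> ?H * ?P"
      using norm_triangle_ineq4[of "jac (w V1) x *v ?n" "jac (w V2) x *v ?n"]
        norm_triangle_ineq4[of "w V1 x" "w V2 x"]
      by (auto simp: matrix_vector_mult_diff_rdistrib distrib_left)
  qed
  have "finite (V1 \<inter> V2)"
    using V(3) card_ge_0_finite by force
  from sum_offdiag_le[of "V1 \<inter> V2" ?seg, OF this seg] V(3)
  have "(\<Sum>a\<in>V1 \<inter> V2. \<Sum>b\<in>V1 \<inter> V2 - {a}. ?seg a b) \<le> 4 * ?P\<^sup>2"
    by simp
  moreover have "?P\<^sup>2 \<le> 2 * ((m V1)\<^sup>2 + (m V2)\<^sup>2)"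
    using sum_squares_bound[of "m V1" "m V2"] by (simp add: power2_sum)
  ultimately show ?thesis
    by simp
qed

lemma bdry_jump_le:
  assumes tr: "triangulation \<Omega> Th" and w: "cellwise_C1_bound Th w m"
    and V: "V \<in> Th" "E \<subseteq> V" "card E = 2"
  shows "1 / 2 * (\<Sum>a\<in>E. \<Sum>b\<in>E - {a}. seg_int a b (\<lambda>x.
           hmax Th powr (-1) * (norm (jac (w V) x *v out_normal V a b))\<^sup>2
         + hmax Th powr (-3) * (norm (w V x))\<^sup>2)) \<le> 2 * (m V)\<^sup>2"
proof -
  let ?H = "hmax Th"
  let ?seg = "\<lambda>a b. seg_int a b (\<lambda>x.
           ?H powr (-1) * (norm (jac (w V) x *v out_normal V a b))\<^sup>2
         + ?H powr (-3) * (norm (w V x))\<^sup>2)"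
  have seg: "?seg a b \<le> 2 * (m V)\<^sup>2" if ab: "a \<in> E" "b \<in> E - {a}" for a b
  proof (rule seg_int_jump_le[OF hmax_pos[OF tr]])
    show "dist a b \<le> ?H"
      using ab V dist_le_cdiam[OF triangulation_triangle[OF tr V(1)]] cdiam_le_hmax[OF tr V(1)]
      by (meson DiffD1 subsetD hull_inc order.trans)
    show "0 \<le> m V"
      using w V by (simp add: cellwise_C1_bound_def)
    fix t :: real
    assume "t \<in> {0..1}"
    then have "a + t *\<^sub>R (b - a) \<in> convex hull V"
      using ab V by (auto intro!: segment_in_triangle)
    then show "norm (jac (w V) (a + t *\<^sub>R (b - a)) *v out_normal V a b) \<le> m V"
      and "norm (w V (a + t *\<^sub>R (b - a))) \<le> ?H * m V"
      using w V norm_out_normal_le unfolding cellwise_C1_bound_def by blast+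
  qed
  have "finite E"
    using V(3) card_ge_0_finite by force
  from sum_offdiag_le[of E ?seg, OF this seg] V(3)
  show ?thesis
    by simp
qed

lemma int_jumps_nonneg: "0 \<le> int_jumps Th w"
  unfolding int_jumps_def Let_def case_prod_beta
  by (intro sum_nonneg mult_nonneg_nonneg seg_int_nonneg) auto

lemma bdry_jumps_nonneg: "0 \<le> bdry_jumps \<Gamma>D Th w"
  unfolding bdry_jumps_def Let_def case_prod_beta
  by (intro sum_nonneg mult_nonneg_nonneg seg_int_nonneg) auto

lemma int_jumps_le:
  assumes tr: "triangulation \<Omega> Th" and w: "cellwise_C1_bound Th w m"
    and deg: "\<And>V. V \<in> Th \<Longrightarrow> real (card (edge_neighbours Th V)) \<le> D"
  shows "int_jumps Th w \<le> 4 * D * (\<Sum>V\<in>Th. (m V)\<^sup>2)"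
proof -
  let ?P = "Sigma Th (edge_neighbours Th)"
  have P: "{(V1, V2). V1 \<in> Th \<and> V2 \<in> Th \<and> V1 \<noteq> V2 \<and> card (V1 \<inter> V2) = 2} = ?P"
    by (auto simp: edge_neighbours_def)
  have "int_jumps Th w \<le> (\<Sum>(V1, V2)\<in>?P. 2 * ((m V1)\<^sup>2 + (m V2)\<^sup>2))"
    unfolding int_jumps_def Let_def P
    by (intro sum_mono, clarify, (simp only: prod.case)?, rule int_jump_pair_le[OF tr w])
      (auto simp: edge_neighbours_def)
  also have "\<dots> = 2 * (\<Sum>p\<in>?P. (m (fst p))\<^sup>2) + 2 * (\<Sum>p\<in>?P. (m (snd p))\<^sup>2)"
    by (simp add: case_prod_beta sum.distrib sum_distrib_left)
  also have "(\<Sum>p\<in>?P. (m (snd p))\<^sup>2) = (\<Sum>p\<in>?P. (m (fst p))\<^sup>2)"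
    by (rule sum.reindex_bij_witness[where i = prod.swap and j = prod.swap])
      (auto simp: edge_neighbours_def Int_commute)
  also have "(\<Sum>p\<in>?P. (m (fst p))\<^sup>2) = (\<Sum>V\<in>Th. \<Sum>V'\<in>edge_neighbours Th V. (m V)\<^sup>2)"
    using triangulation_finite[OF tr]
    by (subst sum.Sigma) (auto simp: case_prod_beta edge_neighbours_def)
  also have "\<dots> \<le> (\<Sum>V\<in>Th. D * (m V)\<^sup>2)"
    by (auto intro!: sum_mono mult_right_mono deg)
  finally show ?thesis
    by (simp add: sum_distrib_left mult.assoc)
qed

lemma bdry_jumps_le:
  assumes tr: "triangulation \<Omega> Th" and w: "cellwise_C1_bound Th w m"
  shows "bdry_jumps \<Gamma>D Th w \<le> 6 * (\<Sum>V\<in>Th. (m V)\<^sup>2)"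
proof -
  let ?Q = "{(V, E). V \<in> Th \<and> E \<subseteq> V \<and> card E = 2 \<and> (\<forall>a\<in>E. \<forall>b\<in>E. open_segment a b \<subseteq> \<Gamma>D)}"
  let ?edges = "\<lambda>V. {E. E \<subseteq> V \<and> card E = 2}"
  have edges: "finite (?edges V)" if "V \<in> Th" for V
    using triangulation_triangle[OF tr that] is_triangle_finite by simp
  have fin: "finite (Sigma Th ?edges)"
    using triangulation_finite[OF tr] edges by (intro finite_SigmaI)
  have "bdry_jumps \<Gamma>D Th w \<le> (\<Sum>(V, E)\<in>?Q. 2 * (m V)\<^sup>2)"
    unfolding bdry_jumps_def Let_def
    by (intro sum_mono, clarify, (simp only: prod.case)?, rule bdry_jump_le[OF tr w]) auto
  also have "\<dots> \<le> (\<Sum>(V, E)\<in>Sigma Th ?edges. 2 * (m V)\<^sup>2)"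
    by (intro sum_mono2[OF fin]) auto
  also have "\<dots> = (\<Sum>V\<in>Th. real (card (?edges V)) * (2 * (m V)\<^sup>2))"
    using edges triangulation_finite[OF tr] by (subst sum.Sigma[symmetric]) auto
  also have "\<dots> = (\<Sum>V\<in>Th. 6 * (m V)\<^sup>2)"
    using triangulation_triangle[OF tr] is_triangle_finite
    by (intro sum.cong) (auto simp: n_subsets is_triangle_def choose_two)
  finally show ?thesis
    by (simp add: sum_distrib_left)
qed

section \<open>The cellwise bubble field\<close>

definition bubble_field :: "cell set \<Rightarrow> (cell \<Rightarrow> mat32) \<Rightarrow> cell \<Rightarrow> pt \<Rightarrow> real^3" where
  "bubble_field Th \<mu> V = (if V \<in> Th
     then bubble (\<mu> V) (column_normal (\<mu> V)) (bary V) (norm (\<mu> V) / hmax Th) else (\<lambda>_. 0))"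

lemma column_normal_mat32: "norm (column_normal (A::mat32)) = 1" "column j A \<bullet> column_normal A = 0"
  by (simp_all add: column_normal)

lemma bubble_field_in_Vh: "bubble_field Th \<mu> \<in> Vh Th"
  by (simp add: Vh_def bubble_field_def bubble_in_P2)

lemma bgrad_bubble_field_bary: "V \<in> Th \<Longrightarrow> bgrad (bubble_field Th \<mu>) V (bary V) = \<mu> V"
  by (simp add: bgrad_def bubble_field_def jac_bubble_center)

lemma L1_bubble_field: "L1 Th y (bubble_field Th \<mu>) = L2 Th y \<mu>"
proof -
  have "lh Th (bgrad y) (bgrad (bubble_field Th \<mu>)) = lh Th (bgrad y) (\<lambda>V x. \<mu> V)"
    unfolding lh_def by (intro ext sum.cong) (simp_all add: bgrad_bubble_field_bary)
  then show ?thesis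
    \<comment> \<open>both sides are THE-descriptions of the same predicate, so no uniqueness is needed\<close>
    by (simp add: L1_def L2_def)
qed

lemma bubble_field_in_KerL1: "\<mu> \<in> KerL2 Th y \<Longrightarrow> bubble_field Th \<mu> \<in> KerL1 Th y"
  by (simp add: KerL1_def KerL2_def L1_bubble_field bubble_field_in_Vh)

lemma bubble_field_nonzero:
  assumes "V \<in> Th" "\<mu> V \<noteq> 0"
  shows "bubble_field Th \<mu> \<noteq> (\<lambda>_ _. 0)"
proof
  assume "bubble_field Th \<mu> = (\<lambda>_ _. 0)"
  then have "bgrad (bubble_field Th \<mu>) V (bary V) = jac (\<lambda>_. 0) (bary V)"
    by (simp add: bgrad_def)
  also have "\<dots> = 0"
    by (simp add: jac_def pd_def vec_eq_iff)
  finally show False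
    using assms by (simp add: bgrad_bubble_field_bary)
qed

lemma ipMgrad_bubble_field:
  assumes "triangulation \<Omega> Th"
  shows "ipMgrad Th \<mu> (bubble_field Th \<mu>) = (\<Sum>V\<in>Th. (norm (\<mu> V))\<^sup>2 * measure lebesgue (convex hull V))"
  unfolding ipMgrad_def using assms
  by (intro sum.cong) (simp_all add: bgrad_def bubble_field_def frob_jac_bubble column_normal_mat32
      integral_const_lmeasurable lmeasurable_triangle triangulation_triangle)

lemma normM_eq:
  assumes "triangulation \<Omega> Th"
  shows "normM Th \<mu> = sqrt (\<Sum>V\<in>Th. (norm (\<mu> V))\<^sup>2 * measure lebesgue (convex hull V))"
  unfolding normM_def using assms
  by (intro arg_cong[where f = sqrt] sum.cong) (simp_all add: frob_eq_inner power2_norm_eq_inner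
      integral_const_lmeasurable lmeasurable_triangle triangulation_triangle)

lemma hess_integral_bubble_field:
  assumes "triangulation \<Omega> Th"
  shows "(\<Sum>V\<in>Th. integral (convex hull V) (hess_sq (bubble_field Th \<mu> V)))
    = (\<Sum>V\<in>Th. 8 * (norm (\<mu> V) / hmax Th)\<^sup>2 * measure lebesgue (convex hull V))"
  using assms
  by (intro sum.cong) (simp_all add: bubble_field_def hess_sq_bubble column_normal_mat32
      integral_const_lmeasurable lmeasurable_triangle triangulation_triangle)

lemma cellwise_C1_bound_bubble_field:
  assumes tr: "triangulation \<Omega> Th"
  shows "cellwise_C1_bound Th (bubble_field Th \<mu>) (\<lambda>V. 3 * norm (\<mu> V))"
  unfolding cellwise_C1_bound_def
proof (intro ballI conjI allI impI)
  fix V x and n :: pt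
  assume V: "V \<in> Th" and x: "x \<in> convex hull V"
  let ?H = "hmax Th" and ?a = "norm (\<mu> V)"
  have H: "0 < ?H"
    using hmax_pos[OF tr] .
  have "dist x (bary V) \<le> cdiam V"
    using triangulation_triangle[OF tr V] x by (simp add: dist_le_cdiam bary_in_triangle)
  then have xb: "norm (x - bary V) \<le> ?H"
    using cdiam_le_hmax[OF tr V] by (simp add: dist_norm)
  have "norm (bubble_field Th \<mu> V x) \<le> ?a * norm (x - bary V) + ?a / ?H * (norm (x - bary V))\<^sup>2"
    using V H norm_bubble_le[where A = "\<mu> V" and e = "column_normal (\<mu> V)" and b = "bary V"
        and c = "norm (\<mu> V) / hmax Th" and x = x, OF column_normal_mat32(1)]
    by (simp add: bubble_field_def)
  also have "\<dots> \<le> ?a * ?H + ?a / ?H * ?H\<^sup>2"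
    using xb H by (intro add_mono mult_left_mono power_mono) auto
  also have "\<dots> \<le> ?H * (3 * ?a)"
    using H by (simp add: power2_eq_square)
  finally show "norm (bubble_field Th \<mu> V x) \<le> ?H * (3 * ?a)" .
  assume n: "norm n \<le> 1"
  have "norm (jac (bubble_field Th \<mu> V) x *v n) \<le> (?a + 2 * (?a / ?H) * norm (x - bary V)) * norm n"
    using V H norm_jac_bubble_mult_le[where A = "\<mu> V" and e = "column_normal (\<mu> V)" and b = "bary V"
        and c = "norm (\<mu> V) / hmax Th" and x = x and n = n, OF column_normal_mat32(1)]
    by (simp add: bubble_field_def)
  also have "\<dots> \<le> (?a + 2 * (?a / ?H) * ?H) * 1"
    using xb H n by (intro mult_mono add_mono mult_left_mono) auto
  also have "\<dots> = 3 * ?a"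
    using H by simp
  finally show "norm (jac (bubble_field Th \<mu> V) x *v n) \<le> 3 * ?a" .
qed simp

lemma Mh_nonzero_cell:
  assumes "\<mu> \<in> Mh Th" "\<mu> \<noteq> (\<lambda>_. 0)"
  shows "\<exists>V\<in>Th. \<mu> V \<noteq> 0"
proof -
  obtain V where "\<mu> V \<noteq> 0"
    using assms(2) by auto
  with assms(1) show ?thesis
    by (auto simp: Mh_def)
qed

lemma hess_bubble_field_bounds:
  assumes tr: "triangulation \<Omega> Th" and sr: "shape_regular \<sigma> Th" and V1: "V1 \<in> Th" "\<mu> V1 \<noteq> 0"
  shows "0 < (\<Sum>V\<in>Th. integral (convex hull V) (hess_sq (bubble_field Th \<mu> V)))"
    and "(\<Sum>V\<in>Th. integral (convex hull V) (hess_sq (bubble_field Th \<mu> V)))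
      \<le> 32 * (\<Sum>V\<in>Th. (norm (\<mu> V))\<^sup>2)"
proof -
  let ?H = "hmax Th" and ?a = "\<lambda>V. measure lebesgue (convex hull V)"
  let ?h = "\<lambda>V. 8 * (norm (\<mu> V) / ?H)\<^sup>2 * ?a V"
  have H: "0 < ?H"
    using hmax_pos[OF tr] .
  have "0 < pi * (hmin Th / (2 * \<sigma>))\<^sup>2"
    using shape_regular_area(1)[OF tr sr V1(1)] hmin_pos[OF tr] by simp
  then have "0 < ?a V1"
    using shape_regular_area(2)[OF tr sr V1(1)] by linarith
  then have "0 < ?h V1"
    using V1 H by simp
  also have "?h V1 \<le> (\<Sum>V\<in>Th. ?h V)"
    using V1(1) triangulation_finite[OF tr] by (intro member_le_sum) auto
  finally show "0 < (\<Sum>V\<in>Th. integral (convex hull V) (hess_sq (bubble_field Th \<mu> V)))"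
    by (simp add: hess_integral_bubble_field[OF tr])
  have "(\<Sum>V\<in>Th. ?h V) \<le> (\<Sum>V\<in>Th. 32 * (norm (\<mu> V))\<^sup>2)"
  proof (rule sum_mono)
    fix V
    assume V: "V \<in> Th"
    have "(cdiam V)\<^sup>2 \<le> ?H\<^sup>2"
      using cdiam_le_hmax[OF tr V] cdiam_pos[OF triangulation_triangle[OF tr V]] by (simp add: power_mono)
    then have "?a V \<le> pi * ?H\<^sup>2"
      using area_triangle_le[OF triangulation_triangle[OF tr V]]
      by (meson mult_left_mono pi_ge_zero order.trans)
    then have "?h V \<le> 8 * (norm (\<mu> V) / ?H)\<^sup>2 * (pi * ?H\<^sup>2)"
      by (intro mult_left_mono) auto
    also have "\<dots> \<le> 32 * (norm (\<mu> V))\<^sup>2"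
      using H mult_right_mono[OF less_imp_le[OF pi_less_4], of "(norm (\<mu> V))\<^sup>2"]
      by (simp add: power_divide)
    finally show "?h V \<le> 32 * (norm (\<mu> V))\<^sup>2" .
  qed
  then show "(\<Sum>V\<in>Th. integral (convex hull V) (hess_sq (bubble_field Th \<mu> V)))
      \<le> 32 * (\<Sum>V\<in>Th. (norm (\<mu> V))\<^sup>2)"
    by (simp add: hess_integral_bubble_field[OF tr] sum_distrib_left)
qed

lemma normH2h_bubble_field_bounds:
  assumes tr: "triangulation \<Omega> Th" and sr: "shape_regular \<sigma> Th" and qu: "quasi_uniform \<kappa> Th"
    and V1: "V1 \<in> Th" "\<mu> V1 \<noteq> 0"
  shows "0 < normH2h \<Gamma>D Th (bubble_field Th \<mu>)"
    and "(normH2h \<Gamma>D Th (bubble_field Th \<mu>))\<^sup>2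
      \<le> (86 + 36 * (4 * \<sigma> * \<kappa>)\<^sup>2) * (\<Sum>V\<in>Th. (norm (\<mu> V))\<^sup>2)"
proof -
  let ?w = "bubble_field Th \<mu>" and ?S = "\<Sum>V\<in>Th. (norm (\<mu> V))\<^sup>2"
  let ?N = "(\<Sum>V\<in>Th. integral (convex hull V) (hess_sq (?w V))) + int_jumps Th ?w + bdry_jumps \<Gamma>D Th ?w"
  note hess = hess_bubble_field_bounds[where \<mu> = \<mu>, OF tr sr V1]
  have nine: "(\<Sum>V\<in>Th. (3 * norm (\<mu> V))\<^sup>2) = 9 * ?S"
    by (simp add: power_mult_distrib sum_distrib_left)
  have "int_jumps Th ?w \<le> 4 * (4 * \<sigma> * \<kappa>)\<^sup>2 * (\<Sum>V\<in>Th. (3 * norm (\<mu> V))\<^sup>2)"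
    by (rule int_jumps_le[OF tr cellwise_C1_bound_bubble_field[OF tr] card_edge_neighbours_le[OF tr sr qu]])
  moreover have "bdry_jumps \<Gamma>D Th ?w \<le> 6 * (\<Sum>V\<in>Th. (3 * norm (\<mu> V))\<^sup>2)"
    by (rule bdry_jumps_le[OF tr cellwise_C1_bound_bubble_field[OF tr]])
  ultimately have "?N \<le> 32 * ?S + 36 * (4 * \<sigma> * \<kappa>)\<^sup>2 * ?S + 54 * ?S"
    using hess(2) unfolding nine by simp
  moreover have "0 < ?N"
    using hess(1) int_jumps_nonneg[of Th ?w] bdry_jumps_nonneg[of \<Gamma>D Th ?w] by linarith
  ultimately show "0 < normH2h \<Gamma>D Th ?w" and "(normH2h \<Gamma>D Th ?w)\<^sup>2 \<le> (86 + 36 * (4 * \<sigma> * \<kappa>)\<^sup>2) * ?S"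
    by (simp_all add: normH2h_def algebra_simps)
qed

lemma area_weighted_sum_ge:
  assumes tr: "triangulation \<Omega> Th" and sr: "shape_regular \<sigma> Th"
  shows "pi * (hmin Th / (2 * \<sigma>))\<^sup>2 * (\<Sum>V\<in>Th. (norm (\<mu> V))\<^sup>2)
    \<le> (\<Sum>V\<in>Th. (norm (\<mu> V))\<^sup>2 * measure lebesgue (convex hull V))"
  unfolding sum_distrib_left
proof (rule sum_mono)
  fix V
  assume "V \<in> Th"
  then show "pi * (hmin Th / (2 * \<sigma>))\<^sup>2 * (norm (\<mu> V))\<^sup>2
    \<le> (norm (\<mu> V))\<^sup>2 * measure lebesgue (convex hull V)"
    using mult_right_mono[OF shape_regular_area(2)[OF tr sr], of V "(norm (\<mu> V))\<^sup>2"]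
    by (simp add: mult.commute)
qed

lemma sqrt_quotient_lower_bound:
  fixes a K M N S :: real
  assumes "0 < S" "0 < N" "N \<le> K * S" "a * S \<le> M" "0 \<le> a"
  shows "sqrt (a / K) \<le> M / (sqrt M * sqrt N)"
proof -
  have "0 < K * S"
    using assms(2,3) by linarith
  then have K: "0 < K"
    using assms(1) by (simp add: zero_less_mult_iff)
  have M: "0 \<le> M"
    using assms(1,4,5) by (meson mult_nonneg_nonneg less_imp_le order.trans)
  have "a * N \<le> a * (K * S)"
    using assms(3,5) by (rule mult_left_mono)
  also have "\<dots> \<le> K * M"
    using mult_left_mono[OF assms(4) less_imp_le[OF K]] by (simp add: mult_ac)
  finally have "a / K \<le> M / N"
    using K assms(2) by (simp add: divide_simps mult.commute)
  then have "sqrt (a / K) \<le> sqrt M / sqrt N"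
    by (metis real_sqrt_divide real_sqrt_le_mono)
  also have "\<dots> = M / (sqrt M * sqrt N)"
    using M by (simp add: divide_divide_eq_left[symmetric] real_div_sqrt)
  finally show ?thesis .
qed

definition inf_sup_constant :: "real \<Rightarrow> real \<Rightarrow> real" where
  "inf_sup_constant \<sigma> \<kappa> = sqrt (pi / (4 * (\<sigma>\<^sup>2 + 1) * (86 + 36 * (4 * \<sigma> * \<kappa>)\<^sup>2)))"

lemma inf_sup_constant_pos: "0 < inf_sup_constant \<sigma> \<kappa>"
proof -
  have "0 < 4 * (\<sigma>\<^sup>2 + 1) * (86 + 36 * (4 * \<sigma> * \<kappa>)\<^sup>2)"
    by (intro mult_pos_pos add_nonneg_pos add_pos_nonneg) auto
  then show ?thesis
    by (simp add: inf_sup_constant_def)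
qed

lemma hmin_inf_sup_constant_le:
  assumes "0 < \<sigma>" and "0 < hmin Th"
  shows "hmin Th * inf_sup_constant \<sigma> \<kappa> \<le> sqrt (pi * (hmin Th / (2 * \<sigma>))\<^sup>2 / (86 + 36 * (4 * \<sigma> * \<kappa>)\<^sup>2))"
proof -
  let ?K = "86 + 36 * (4 * \<sigma> * \<kappa>)\<^sup>2"
  have "0 < ?K"
    by (simp add: add_pos_nonneg)
  then have "pi / (4 * (\<sigma>\<^sup>2 + 1) * ?K) \<le> pi / (4 * \<sigma>\<^sup>2 * ?K)"
    using assms(1) by (intro frac_le mult_right_mono) auto
  then have "(hmin Th)\<^sup>2 * (pi / (4 * (\<sigma>\<^sup>2 + 1) * ?K)) \<le> (hmin Th)\<^sup>2 * (pi / (4 * \<sigma>\<^sup>2 * ?K))"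
    by (rule mult_left_mono) simp
  also have "\<dots> = pi * (hmin Th / (2 * \<sigma>))\<^sup>2 / ?K"
    by (simp add: power_divide power_mult_distrib)
  finally have "sqrt ((hmin Th)\<^sup>2 * (pi / (4 * (\<sigma>\<^sup>2 + 1) * ?K))) \<le> sqrt (pi * (hmin Th / (2 * \<sigma>))\<^sup>2 / ?K)"
    by (rule real_sqrt_le_mono)
  moreover have "sqrt ((hmin Th)\<^sup>2 * (pi / (4 * (\<sigma>\<^sup>2 + 1) * ?K))) = hmin Th * inf_sup_constant \<sigma> \<kappa>"
    unfolding inf_sup_constant_def by (simp only: real_sqrt_mult real_sqrt_abs abs_of_pos[OF assms(2)])
  ultimately show ?thesis
    by linarith
qed

lemma bubble_field_quotient_ge:
  assumes tr: "triangulation \<Omega> Th" and sr: "shape_regular \<sigma> Th" and qu: "quasi_uniform \<kappa> Th"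
    and \<mu>: "\<mu> \<in> Mh Th" "\<mu> \<noteq> (\<lambda>_. 0)"
  shows "hmin Th * inf_sup_constant \<sigma> \<kappa>
    \<le> ipMgrad Th \<mu> (bubble_field Th \<mu>) / (normM Th \<mu> * normH2h \<Gamma>D Th (bubble_field Th \<mu>))"
proof -
  let ?M = "\<Sum>V\<in>Th. (norm (\<mu> V))\<^sup>2 * measure lebesgue (convex hull V)"
  obtain V1 where V1: "V1 \<in> Th" "\<mu> V1 \<noteq> 0"
    using Mh_nonzero_cell[OF \<mu>] by blast
  then have S: "0 < (\<Sum>V\<in>Th. (norm (\<mu> V))\<^sup>2)"
    using triangulation_finite[OF tr] by (simp add: sum_pos2[where i = V1])
  note H2 = normH2h_bubble_field_bounds[where \<mu> = \<mu> and \<Gamma>D = \<Gamma>D, OF tr sr qu V1]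
  have "hmin Th * inf_sup_constant \<sigma> \<kappa>
      \<le> sqrt (pi * (hmin Th / (2 * \<sigma>))\<^sup>2 / (86 + 36 * (4 * \<sigma> * \<kappa>)\<^sup>2))"
    using shape_regular_area(1)[OF tr sr V1(1)] hmin_pos[OF tr] by (rule hmin_inf_sup_constant_le)
  also have "\<dots> \<le> ?M / (sqrt ?M * sqrt ((normH2h \<Gamma>D Th (bubble_field Th \<mu>))\<^sup>2))"
    using H2(1) by (intro sqrt_quotient_lower_bound[OF S _ H2(2) area_weighted_sum_ge[OF tr sr]]) auto
  also have "\<dots> = ipMgrad Th \<mu> (bubble_field Th \<mu>) / (normM Th \<mu> * normH2h \<Gamma>D Th (bubble_field Th \<mu>))"
    using H2(1) by (simp add: ipMgrad_bubble_field[OF tr] normM_eq[OF tr])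
  finally show ?thesis .
qed

lemma inf_sup_quotient_ge:
  assumes tr: "triangulation \<Omega> Th" and sr: "shape_regular \<sigma> Th" and qu: "quasi_uniform \<kappa> Th"
  shows "ereal (inf_sup_constant \<sigma> \<kappa> * hmin Th)
    \<le> (INF \<mu>\<in>KerL2 Th y - {\<lambda>_. 0}. SUP w\<in>KerL1 Th y - {\<lambda>_ _. 0}.
         ereal (ipMgrad Th \<mu> w / (normM Th \<mu> * normH2h \<Gamma>D Th w)))"
proof (rule INF_greatest)
  fix \<mu>
  assume \<mu>: "\<mu> \<in> KerL2 Th y - {\<lambda>_. 0}"
  then have \<mu>': "\<mu> \<in> Mh Th" "\<mu> \<noteq> (\<lambda>_. 0)"
    by (auto simp: KerL2_def)
  then obtain V where "V \<in> Th" "\<mu> V \<noteq> 0"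
    using Mh_nonzero_cell by blast
  then have "bubble_field Th \<mu> \<in> KerL1 Th y - {\<lambda>_ _. 0}"
    using \<mu> bubble_field_in_KerL1 bubble_field_nonzero by blast
  then show "ereal (inf_sup_constant \<sigma> \<kappa> * hmin Th)
    \<le> (SUP w\<in>KerL1 Th y - {\<lambda>_ _. 0}. ereal (ipMgrad Th \<mu> w / (normM Th \<mu> * normH2h \<Gamma>D Th w)))"
    by (rule SUP_upper2) (use bubble_field_quotient_ge[OF tr sr qu \<mu>'] in \<open>simp add: mult.commute\<close>)
qed

theorem lemma4p8:
  fixes \<Omega> \<Gamma>D :: "(real^2) set" and \<sigma> \<kappa> :: real
  assumes "open \<Omega>" and "connected \<Omega>" and "bounded \<Omega>" and "lipschitz_boundary \<Omega>"
    and "openin (top_of_set (frontier \<Omega>)) \<Gamma>D" and "\<Gamma>D \<noteq> {}"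
  shows "\<exists>\<beta>'>0. \<forall>Th. triangulation \<Omega> Th \<and> shape_regular \<sigma> Th \<and> quasi_uniform \<kappa> Th \<longrightarrow>
           (\<forall>y\<in>Ah Th.
              (INF \<mu>\<in>KerL2 Th y - {\<lambda>_. 0}. SUP w\<in>KerL1 Th y - {\<lambda>_ _. 0}.
                 ereal (ipMgrad Th \<mu> w / (normM Th \<mu> * normH2h \<Gamma>D Th w)))
              \<ge> ereal (\<beta>' * hmin Th))"
  by (intro exI[of _ "inf_sup_constant \<sigma> \<kappa>"] conjI allI impI ballI inf_sup_constant_pos)
    (clarify, rule inf_sup_quotient_ge; assumption)

end
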